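(* Let $\mathcal C$ be the UM simplex $(n,k)$ code and $s\ge0$. Then the binary block code generated by $G_{\rm total}$ (whose nodes are the coordinates of $c_{\rm total}=(c_0,\dots,c_{s+1})=u_{\rm total}G_{\rm total}$) has the Easy Repair Property.
   Context: Let $k\ge2$ and let $G\in\mathbb F_2^{k\times(2^k-1)}$ be a generator matrix of the binary simplex code (columns are all distinct nonzero vectors of $\mathbb F_2^k$); set $n=2(2^k-1)$. The UM simplex $(n,k)$ code is the binary convolutional code with encoder $G(D)=G_0+G_1D$, $G_0=[G\ G]$, $G_1=[G\ 0]\in\mathbb F_2^{k\times n}$. For $u_{\rm total}=(u_0,\dots,u_s)\in\mathbb F_2^{(s+1)k}$, $c_{\rm total}=u_{\rm total}G_{\rm total}$, where $G_{\rm total}\in\mathbb F_2^{(s+1)k\times(s+2)n}$ is the block matrix whose $i$-th block row ($i=0,\dots,s$) has $G_0$ in block column $i$, $G_1$ in block column $i+1$ and zeros elsewhere. Nodes are the coordinates of $c_{\rm total}$, corresponding to the columns $g_1,\dots,g_N$ of $G_{\rm total}$. An erasure pattern is a set $S^e$ of erased nodes; the others are live. It is correctable if no two distinct codewords coincide on all live positions. A node $c_i$ is related to distinct nodes $c_{j_1},\dots,c_{j_\gamma}$ (all different from $c_i$) if $g_i=g_{j_1}+\dots+g_{j_\gamma}$. An erased node allows for easy repair if it is related to $\gamma\le2$ live nodes. An erasure pattern allows for easy repair if all erased nodes can be recovered by a sequence of easy repairs, where after each step the recovered node is regarded as live. A code has the Easy Repair Property if every correctable erasure pattern allows for easy repair.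 *)

theory Defs
  imports Main "HOL-Library.Z2"
begin

text \<open>Binary vectors/matrices are functions into the field bit = F_2.
  A k x m matrix is a function nat => nat => bit (row, column); only
  rows < k and columns < m are relevant.\<close>

definition simplex_generator :: "nat \<Rightarrow> (nat \<Rightarrow> nat \<Rightarrow> bit) \<Rightarrow> bool" where
  "simplex_generator k G \<longleftrightarrow>
     bij_betw (\<lambda>j. (\<lambda>i. if i < k then G i j else 0)) {..<2^k - 1}
              {v :: nat \<Rightarrow> bit. v \<noteq> (\<lambda>_. 0) \<and> (\<forall>i\<ge>k. v i = 0)}"

text \<open>G0 = [G G], G1 = [G 0], each k x n with n = 2(2^k - 1).\<close>
definition UM_G0 :: "nat \<Rightarrow> (nat \<Rightarrow> nat \<Rightarrow> bit) \<Rightarrow> nat \<Rightarrow> nat \<Rightarrow> bit" where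
  "UM_G0 k G i j = (let m = 2^k - 1 in if j < m then G i j else G i (j - m))"

definition UM_G1 :: "nat \<Rightarrow> (nat \<Rightarrow> nat \<Rightarrow> bit) \<Rightarrow> nat \<Rightarrow> nat \<Rightarrow> bit" where
  "UM_G1 k G i j = (let m = 2^k - 1 in if j < m then G i j else 0)"

definition UM_n :: "nat \<Rightarrow> nat" where
  "UM_n k = 2 * (2^k - 1)"

text \<open>G_total: (s+1)k x (s+2)n block matrix; block row i has G0 in block
  column i and G1 in block column i+1, zeros elsewhere. Entries outside
  the matrix range are 0.\<close>
definition G_total :: "nat \<Rightarrow> (nat \<Rightarrow> nat \<Rightarrow> bit) \<Rightarrow> nat \<Rightarrow> nat \<Rightarrow> nat \<Rightarrow> bit" where
  "G_total k G s r c =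
     (let n = UM_n k; bi = r div k; a = r mod k; bj = c div n; j = c mod n in
      if r < (s+1)*k \<and> c < (s+2)*n then
        (if bj = bi then UM_G0 k G a j
         else if bj = bi + 1 then UM_G1 k G a j else 0)
      else 0)"

definition num_nodes :: "nat \<Rightarrow> nat \<Rightarrow> nat" where
  "num_nodes k s = (s + 2) * UM_n k"

definition msg_len :: "nat \<Rightarrow> nat \<Rightarrow> nat" where
  "msg_len k s = (s + 1) * k"

definition gcol :: "nat \<Rightarrow> (nat \<Rightarrow> nat \<Rightarrow> bit) \<Rightarrow> nat \<Rightarrow> nat \<Rightarrow> nat \<Rightarrow> bit" where
  "gcol k G s c = (\<lambda>r. G_total k G s r c)"

definition codeword :: "nat \<Rightarrow> (nat \<Rightarrow> nat \<Rightarrow> bit) \<Rightarrow> nat \<Rightarrow> (nat \<Rightarrow> bit) \<Rightarrow> nat \<Rightarrow> bit" where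
  "codeword k G s u c = (\<Sum>r<msg_len k s. u r * G_total k G s r c)"

definition correctable :: "nat \<Rightarrow> (nat \<Rightarrow> nat \<Rightarrow> bit) \<Rightarrow> nat \<Rightarrow> nat set \<Rightarrow> bool" where
  "correctable k G s Se \<longleftrightarrow>
     (\<forall>u u'. (\<forall>c<num_nodes k s. c \<notin> Se \<longrightarrow> codeword k G s u c = codeword k G s u' c)
        \<longrightarrow> (\<forall>c<num_nodes k s. codeword k G s u c = codeword k G s u' c))"

definition related :: "nat \<Rightarrow> (nat \<Rightarrow> nat \<Rightarrow> bit) \<Rightarrow> nat \<Rightarrow> nat \<Rightarrow> nat set \<Rightarrow> bool" where
  "related k G s i J \<longleftrightarrow>
     finite J \<and> J \<subseteq> {..<num_nodes k s} \<and> i \<notin> J \<and>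
     gcol k G s i = (\<lambda>r. \<Sum>j\<in>J. gcol k G s j r)"

definition easy_repair_node :: "nat \<Rightarrow> (nat \<Rightarrow> nat \<Rightarrow> bit) \<Rightarrow> nat \<Rightarrow> nat set \<Rightarrow> nat \<Rightarrow> bool" where
  "easy_repair_node k G s L i \<longleftrightarrow>
     (\<exists>J. J \<subseteq> L \<and> card J \<le> 2 \<and> related k G s i J)"

definition easy_repair_pattern :: "nat \<Rightarrow> (nat \<Rightarrow> nat \<Rightarrow> bit) \<Rightarrow> nat \<Rightarrow> nat set \<Rightarrow> bool" where
  "easy_repair_pattern k G s Se \<longleftrightarrow>
     (\<exists>xs. distinct xs \<and> set xs = Se \<and>
        (\<forall>t<length xs. easy_repair_node k G s
            (({..<num_nodes k s} - Se) \<union> set (take t xs)) (xs ! t)))"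

definition easy_repair_property :: "nat \<Rightarrow> (nat \<Rightarrow> nat \<Rightarrow> bit) \<Rightarrow> nat \<Rightarrow> bool" where
  "easy_repair_property k G s \<longleftrightarrow>
     (\<forall>Se. Se \<subseteq> {..<num_nodes k s} \<longrightarrow> correctable k G s Se \<longrightarrow> easy_repair_pattern k G s Se)"

end

theory Submission
  imports Defs "HOL-Library.Function_Algebras"
begin

text \<open>
  View the message blocks u_0, ..., u_s as the vertices of a path. Every node of G_total
  carries a nonzero simplex column v of F_2^k, placed in the rows of a single block b (a
  loop at b) or of two consecutive blocks b - 1 and b (a link). If greedy easy repair gets
  stuck, the live set S is closed under easy repair; then for each loop or link position
  the vectors of live nodes there, together with 0, are closed under addition, and along
  each triangle Loop (b - 1), Link b, Loop b a vector present at two positions is present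
  at the third. Now take an erased node that is a linear combination of live nodes (which
  correctability guarantees, by duality over F_2). Restricting the relation to each block
  and propagating the link contributions along the path from both ends shows that the
  vector of the erased node is the vector of a live node at the same position, so its
  column equals a live column and it is easily repairable after all.
\<close>

declare add_bit_eq_xor [simp del] mult_bit_eq_and [simp del]
  \<comment> \<open>keep F_2 arithmetic as field arithmetic instead of XOR/AND\<close>

lemma bit_add_self [simp]: "(x::bit) + x = 0"
  by (cases x) simp_all

lemma bit_fun_add_self [simp]: "(f::'a \<Rightarrow> bit) + f = 0"
  by (simp add: fun_eq_iff)

lemma bit_fun_mult_2 [simp]: "2 * (f::'a \<Rightarrow> bit) = 0"
  by (simp add: fun_eq_iff)

lemma bit_fun_add_eq_0_iff [simp]: "(f::'a \<Rightarrow> bit) + g = 0 \<longleftrightarrow> f = g"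
  by (metis add_diff_cancel_right' bit_fun_add_self diff_zero)

definition bit_inner :: "nat \<Rightarrow> (nat \<Rightarrow> bit) \<Rightarrow> (nat \<Rightarrow> bit) \<Rightarrow> bit" where
  "bit_inner M u v = (\<Sum>r<M. u r * v r)"

lemma bit_inner_add_left: "bit_inner M (u + w) v = bit_inner M u v + bit_inner M w v"
  by (simp add: bit_inner_def distrib_right sum.distrib)

lemma bit_inner_add_right: "bit_inner M u (v + w) = bit_inner M u v + bit_inner M u w"
  by (simp add: bit_inner_def distrib_left sum.distrib)

lemma bit_inner_unit: "r < M \<Longrightarrow> bit_inner M (\<lambda>r'. of_bool (r' = r)) v = v r"
  by (simp add: bit_inner_def if_distrib cong: if_cong)

lemma exists_separating_vector:
  assumes "finite S"
    and "\<forall>J\<subseteq>S. \<exists>r<M. y r \<noteq> (\<Sum>j\<in>J. g j r)"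
  shows "\<exists>u. (\<forall>j\<in>S. bit_inner M u (g j) = 0) \<and> bit_inner M u y = 1"
  using assms
proof (induction S arbitrary: y rule: finite_induct)
  case empty
  then obtain r where "r < M" "y r \<noteq> 0"
    by (metis empty_subsetI sum.empty)
  then have "bit_inner M (\<lambda>r'. of_bool (r' = r)) y = 1"
    by (simp add: bit_inner_unit)
  then show ?case by blast
next
  case (insert x S)
  have y_outside: "\<forall>J\<subseteq>S. \<exists>r<M. y r \<noteq> (\<Sum>j\<in>J. g j r)"
    using insert.prems by (meson subset_insertI2)
  obtain u where u: "\<forall>j\<in>S. bit_inner M u (g j) = 0" "bit_inner M u y = 1"
    using insert.IH[OF y_outside] by blast
  have yx_outside: "\<forall>J\<subseteq>S. \<exists>r<M. (y + g x) r \<noteq> (\<Sum>j\<in>J. g j r)"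
  proof (intro allI impI)
    fix J assume "J \<subseteq> S"
    then have "finite J" "x \<notin> J"
      using insert.hyps finite_subset by blast+
    moreover obtain r where "r < M" "y r \<noteq> (\<Sum>j\<in>insert x J. g j r)"
      using insert.prems[rule_format, OF insert_mono[OF \<open>J \<subseteq> S\<close>]] by blast
    ultimately have "y r \<noteq> g x r + (\<Sum>j\<in>J. g j r)"
      by simp
    then have "(y + g x) r \<noteq> (\<Sum>j\<in>J. g j r)"
      by (cases "y r"; cases "g x r"; cases "\<Sum>j\<in>J. g j r") simp_all
    with \<open>r < M\<close> show "\<exists>r<M. (y + g x) r \<noteq> (\<Sum>j\<in>J. g j r)"
      by blast
  qed
  obtain w where w: "\<forall>j\<in>S. bit_inner M w (g j) = 0" "bit_inner M w (y + g x) = 1"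
    using insert.IH[OF yx_outside] by blast
  show ?case
  proof (cases "bit_inner M u (g x) = 0")
    case True
    then show ?thesis using u by auto
  next
    case False
    then have "bit_inner M u (g x) = 1" by simp
    show ?thesis
    proof (cases "bit_inner M w (g x) = 0")
      case True
      then show ?thesis using w by (auto simp: bit_inner_add_right)
    next
      case False
      then have "bit_inner M w y = 0"
        using w(2) by (simp add: bit_inner_add_right)
      have "\<forall>j\<in>insert x S. bit_inner M (u + w) (g j) = 0"
        using u w \<open>bit_inner M u (g x) = 1\<close> False by (simp add: bit_inner_add_left)
      moreover have "bit_inner M (u + w) y = 1"
        using u(2) \<open>bit_inner M w y = 0\<close> by (simp add: bit_inner_add_left)
      ultimately show ?thesis by blast
    qed
  qed
qed

lemma exists_repair_order:
  assumes "finite E" "E \<subseteq> A"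
    and "\<forall>T\<subseteq>E. T \<noteq> {} \<longrightarrow> (\<exists>i\<in>T. P (A - T) i)"
  shows "\<exists>xs. distinct xs \<and> set xs = E \<and>
           (\<forall>t<length xs. P ((A - E) \<union> set (take t xs)) (xs ! t))"
  using assms
proof (induction E rule: finite_remove_induct)
  case empty
  then show ?case by auto
next
  case (remove E)
  then obtain i where i: "i \<in> E" "P (A - E) i" by blast
  have "E - {i} \<subseteq> A" "\<forall>T\<subseteq>E - {i}. T \<noteq> {} \<longrightarrow> (\<exists>i\<in>T. P (A - T) i)"
    using remove.prems by auto
  then obtain xs where xs: "distinct xs" "set xs = E - {i}"
      "\<forall>t<length xs. P ((A - (E - {i})) \<union> set (take t xs)) (xs ! t)"
    using remove.IH[OF i(1)] remove.hyps(1) by auto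
  have "(A - E) \<union> set (take (Suc t) (i # xs)) = (A - (E - {i})) \<union> set (take t xs)" for t
    using i remove.prems by auto
  then have "\<forall>t<length (i # xs). P ((A - E) \<union> set (take t (i # xs))) ((i # xs) ! t)"
    using i xs by (auto simp: less_Suc_eq_0_disj)
  moreover have "distinct (i # xs)" "set (i # xs) = E" using xs i by auto
  ultimately show ?case by blast
qed

lemma correctable_mono:
  assumes "correctable k G s E" "T \<subseteq> E"
  shows "correctable k G s T"
  using assms unfolding correctable_def by blast

text \<open>\<open>Void\<close> is the zero column in the second half of the last block column.\<close>

datatype support = Loop nat | Link nat | Void

fun blocks :: "support \<Rightarrow> nat set" where
  "blocks (Loop b) = {b}"
| "blocks (Link b) = {b - 1, b}"
| "blocks Void = {}"

locale um_simplex_code =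
  fixes k s :: nat and G :: "nat \<Rightarrow> nat \<Rightarrow> bit"
  assumes k_pos: "0 < k" and simplex: "simplex_generator k G"
begin

abbreviation "m \<equiv> (2::nat) ^ k - 1"
abbreviation "N \<equiv> num_nodes k s"
abbreviation "M \<equiv> msg_len k s"

lemma m_pos: "0 < m"
  using one_less_power[of "2::nat" k] k_pos by simp

lemma UM_n_eq: "UM_n k = 2 * m"
  by (simp add: UM_n_def)

lemma simplex_columns:
  "(\<lambda>j i. if i < k then G i j else 0) ` {..<m} = {v. v \<noteq> 0 \<and> (\<forall>i\<ge>k. v i = 0)}"
  using simplex by (simp add: simplex_generator_def bij_betw_def zero_fun_def)

text \<open>
  Both halves of G0 repeat the simplex columns, hence the reduction mod m. Block column t
  holds G0 of block row t and G1 = [G 0] of block row t - 1, which gives the supports.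
\<close>

definition node_vector :: "nat \<Rightarrow> nat \<Rightarrow> bit" where
  "node_vector c = (\<lambda>a. if a < k then G a (c mod UM_n k mod m) else 0)"

definition node_support :: "nat \<Rightarrow> support" where
  "node_support c = (let t = c div UM_n k in
     if c mod UM_n k < m then (if t = 0 then Loop 0 else if t \<le> s then Link t else Loop s)
     else if t \<le> s then Loop t else Void)"

definition spread :: "nat set \<Rightarrow> (nat \<Rightarrow> bit) \<Rightarrow> nat \<Rightarrow> bit" where
  "spread W v = (\<lambda>r. if r < M \<and> r div k \<in> W then v (r mod k) else 0)"

lemma spread_add: "spread W (v + w) = spread W v + spread W w"
  by (simp add: spread_def fun_eq_iff)

lemma G_total_entry:
  assumes "r < M" "c < N"
  shows "G_total k G s r c =
    (if c div UM_n k = r div k then UM_G0 k G (r mod k) (c mod UM_n k)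
     else if c div UM_n k = r div k + 1 then UM_G1 k G (r mod k) (c mod UM_n k) else 0)"
  using assms by (simp add: G_total_def msg_len_def num_nodes_def Let_def)

lemma gcol_spread:
  assumes "c < N"
  shows "gcol k G s c = spread (blocks (node_support c)) (node_vector c)"
proof
  fix r
  define t j b a where "t = c div UM_n k" and "j = c mod UM_n k"
    and "b = r div k" and "a = r mod k"
  have "t \<le> s + 1"
    using assms less_mult_imp_div_less[of c "s + 2" "UM_n k"] by (simp add: t_def num_nodes_def)
  have "j < 2 * m"
    using m_pos by (simp add: j_def UM_n_eq)
  show "gcol k G s c r = spread (blocks (node_support c)) (node_vector c) r"
  proof (cases "r < M")
    case False
    then show ?thesis by (simp add: gcol_def G_total_def spread_def msg_len_def Let_def)
  next
    case True
    then have "b \<le> s"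
      using less_mult_imp_div_less[of r "s + 1" k] by (simp add: b_def msg_len_def)
    have "a < k" using k_pos by (simp add: a_def)
    show ?thesis
    proof (cases "j < m")
      case True
      then have "(t = b \<or> t = b + 1) \<longleftrightarrow> b \<in> blocks (node_support c)"
        using \<open>t \<le> s + 1\<close> \<open>b \<le> s\<close> by (auto simp: node_support_def Let_def t_def j_def)
      then show ?thesis
        using True \<open>r < M\<close> \<open>a < k\<close> assms
        by (auto simp: gcol_def G_total_entry UM_G0_def UM_G1_def spread_def node_vector_def
            t_def j_def a_def b_def)
    next
      case False
      then have "t = b \<longleftrightarrow> b \<in> blocks (node_support c)"
        using \<open>t \<le> s + 1\<close> \<open>b \<le> s\<close> by (auto simp: node_support_def Let_def t_def j_def)
      moreover have "j mod m = j - m"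
        using False \<open>j < 2 * m\<close> by (simp add: mod_if)
      ultimately show ?thesis
        using False \<open>r < M\<close> \<open>a < k\<close> assms
        by (auto simp: gcol_def G_total_entry UM_G0_def UM_G1_def spread_def node_vector_def
            t_def j_def a_def b_def)
    qed
  qed
qed

definition valid_support :: "support \<Rightarrow> bool" where
  "valid_support e \<longleftrightarrow> (case e of Loop b \<Rightarrow> b \<le> s | Link b \<Rightarrow> 1 \<le> b \<and> b \<le> s | Void \<Rightarrow> False)"

lemma node_support_cases: "c < N \<Longrightarrow> node_support c = Void \<or> valid_support (node_support c)"
  by (auto simp: node_support_def valid_support_def Let_def)

lemma node_vector_nonzero: "node_vector c \<noteq> 0"
proof -
  have "c mod UM_n k mod m < m" using m_pos by simp
  then have "node_vector c \<in> (\<lambda>j i. if i < k then G i j else 0) ` {..<m}"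
    by (auto simp: node_vector_def)
  then show ?thesis unfolding simplex_columns by simp
qed

lemma node_vector_vanishes: "k \<le> a \<Longrightarrow> node_vector c a = 0"
  by (simp add: node_vector_def)

lemma node_index:
  assumes "b \<le> s + 1" "j < UM_n k"
  shows "b * UM_n k + j < N" "(b * UM_n k + j) div UM_n k = b" "(b * UM_n k + j) mod UM_n k = j"
proof -
  have "b * UM_n k + j < (b + 1) * UM_n k" using assms by simp
  also have "\<dots> \<le> N" using assms by (simp add: num_nodes_def mult_right_mono del: mult_Suc)
  finally show "b * UM_n k + j < N" .
qed (use assms in simp_all)

lemma node_exists:
  assumes e: "valid_support e" and "w \<noteq> 0" "\<forall>a\<ge>k. w a = 0"
  shows "\<exists>c<N. node_support c = e \<and> node_vector c = w"
proof -
  have "w \<in> (\<lambda>j i. if i < k then G i j else 0) ` {..<m}"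
    using assms(2,3) unfolding simplex_columns by simp
  then obtain p where "p < m" and w: "w = (\<lambda>a. if a < k then G a p else 0)"
    by auto
  have vector: "node_vector c = w" if "c mod UM_n k mod m = p" for c
    unfolding node_vector_def that w ..
  show ?thesis
  proof (cases e)
    case (Loop b)
    define c where "c = b * UM_n k + (m + p)"
    have "b \<le> s" using e Loop by (simp add: valid_support_def)
    then have c: "c < N" "c div UM_n k = b" "c mod UM_n k = m + p"
      using node_index[of b "m + p"] \<open>p < m\<close> by (simp_all add: c_def UM_n_eq)
    have "\<not> c mod UM_n k < m"
      unfolding c(3) by (rule not_add_less1)
    then have "node_support c = e"
      using c(2) \<open>b \<le> s\<close> Loop by (simp add: node_support_def)
    moreover have "c mod UM_n k mod m = p"
      unfolding c(3) mod_add_self1 using \<open>p < m\<close> by simp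
    then have "node_vector c = w" by (rule vector)
    ultimately show ?thesis using c(1) by blast
  next
    case (Link b)
    define c where "c = b * UM_n k + p"
    have "1 \<le> b" "b \<le> s" using e Link by (simp_all add: valid_support_def)
    then have c: "c < N" "c div UM_n k = b" "c mod UM_n k = p"
      using node_index[of b p] \<open>p < m\<close> by (simp_all add: c_def UM_n_eq)
    then have "node_support c = e"
      using \<open>1 \<le> b\<close> \<open>b \<le> s\<close> \<open>p < m\<close> Link by (simp add: node_support_def)
    moreover have "c mod UM_n k mod m = p"
      unfolding c(3) using \<open>p < m\<close> by simp
    then have "node_vector c = w" by (rule vector)
    ultimately show ?thesis using c(1) by blast
  next
    case Void
    then show ?thesis using e by (simp add: valid_support_def)
  qed
qed

definition repair_closed :: "nat set \<Rightarrow> bool" where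
  "repair_closed S \<longleftrightarrow> S \<subseteq> {..<N} \<and> (\<forall>c<N. c \<notin> S \<longrightarrow> \<not> easy_repair_node k G s S c)"

lemma repair_closed_mem:
  assumes "repair_closed S" "c < N" "finite J" "J \<subseteq> S" "card J \<le> 2"
    and "gcol k G s c = (\<lambda>r. \<Sum>j\<in>J. gcol k G s j r)"
  shows "c \<in> S"
proof (rule ccontr)
  assume "c \<notin> S"
  with assms have "related k G s c J"
    by (auto simp: related_def repair_closed_def)
  with assms have "easy_repair_node k G s S c"
    by (auto simp: easy_repair_node_def)
  with \<open>c \<notin> S\<close> assms(1,2) show False
    by (simp add: repair_closed_def)
qed

lemma repair_closed_mem_add:
  assumes "repair_closed S" "c < N" "c1 \<in> S" "c2 \<in> S"
    and "gcol k G s c = gcol k G s c1 + gcol k G s c2"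
  shows "c \<in> S"
proof (cases "c1 = c2")
  case True
  then show ?thesis
    using repair_closed_mem[OF assms(1,2), of "{}"] assms(5) by (simp add: zero_fun_def)
next
  case False
  then show ?thesis
    using repair_closed_mem[OF assms(1,2), of "{c1, c2}"] assms(3-5) by (simp add: plus_fun_def)
qed

definition live_vectors :: "nat set \<Rightarrow> support \<Rightarrow> (nat \<Rightarrow> bit) set" where
  "live_vectors S e = insert 0 (node_vector ` {c \<in> S. node_support c = e})"

lemma zero_live_vectors [simp]: "0 \<in> live_vectors S e"
  by (simp add: live_vectors_def)

lemma live_vectorsI: "c \<in> S \<Longrightarrow> node_vector c \<in> live_vectors S (node_support c)"
  by (simp add: live_vectors_def)

lemma live_vectors_vanish: "v \<in> live_vectors S e \<Longrightarrow> k \<le> a \<Longrightarrow> v a = 0"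
  by (auto simp: live_vectors_def node_vector_vanishes)

lemma live_vectors_add:
  assumes S: "repair_closed S" and e: "valid_support e"
    and v: "v \<in> live_vectors S e" and w: "w \<in> live_vectors S e"
  shows "v + w \<in> live_vectors S e"
proof (cases "v = 0 \<or> w = 0 \<or> v = w")
  case True
  then show ?thesis using v w by (auto simp: live_vectors_def)
next
  case False
  then obtain c1 c2 where c1: "c1 \<in> S" "node_support c1 = e" "node_vector c1 = v"
    and c2: "c2 \<in> S" "node_support c2 = e" "node_vector c2 = w"
    using v w by (auto simp: live_vectors_def)
  have "v + w \<noteq> 0"
    using False by simp
  moreover have "\<forall>a\<ge>k. (v + w) a = 0"
    using live_vectors_vanish[OF v] live_vectors_vanish[OF w] by simp
  ultimately obtain c where c: "c < N" "node_support c = e" "node_vector c = v + w"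
    using node_exists[OF e] by blast
  have "c1 < N" "c2 < N" using c1 c2 S by (auto simp: repair_closed_def)
  then have "gcol k G s c = gcol k G s c1 + gcol k G s c2"
    using c c1 c2 by (simp add: gcol_spread spread_add)
  then have "c \<in> S" using repair_closed_mem_add[OF S c(1) c1(1) c2(1)] by simp
  then show ?thesis using live_vectorsI[of c S] c by simp
qed

lemma live_vectors_triangle:
  assumes S: "repair_closed S" and e: "valid_support e"
    and v1: "v \<in> live_vectors S e1" and v2: "v \<in> live_vectors S e2"
    and spread_eq: "spread (blocks e) v = spread (blocks e1) v + spread (blocks e2) v"
  shows "v \<in> live_vectors S e"
proof (cases "v = 0")
  case True
  then show ?thesis by simp
next
  case False
  then obtain c1 c2 where c1: "c1 \<in> S" "node_support c1 = e1" "node_vector c1 = v"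
    and c2: "c2 \<in> S" "node_support c2 = e2" "node_vector c2 = v"
    using v1 v2 by (auto simp: live_vectors_def)
  obtain c where c: "c < N" "node_support c = e" "node_vector c = v"
    using node_exists[OF e False] live_vectors_vanish[OF v1] by blast
  have "c1 < N" "c2 < N" using c1 c2 S by (auto simp: repair_closed_def)
  then have "gcol k G s c = gcol k G s c1 + gcol k G s c2"
    using c c1 c2 spread_eq by (simp add: gcol_spread)
  then have "c \<in> S" using repair_closed_mem_add[OF S c(1) c1(1) c2(1)] by simp
  then show ?thesis using live_vectorsI[of c S] c by simp
qed

lemma spread_Link:
  "1 \<le> b \<Longrightarrow> spread (blocks (Link b)) v = spread (blocks (Loop (b - 1))) v + spread (blocks (Loop b)) v"
  by (auto simp: spread_def fun_eq_iff)

lemma live_vectors_triangle_Link: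
  assumes S: "repair_closed S" and b: "1 \<le> b" "b \<le> s"
  shows live_Loop_right: "v \<in> live_vectors S (Loop (b - 1)) \<Longrightarrow> v \<in> live_vectors S (Link b)
           \<Longrightarrow> v \<in> live_vectors S (Loop b)"
    and live_Loop_left: "v \<in> live_vectors S (Loop b) \<Longrightarrow> v \<in> live_vectors S (Link b)
           \<Longrightarrow> v \<in> live_vectors S (Loop (b - 1))"
    and live_Link: "v \<in> live_vectors S (Loop (b - 1)) \<Longrightarrow> v \<in> live_vectors S (Loop b)
           \<Longrightarrow> v \<in> live_vectors S (Link b)"
  using live_vectors_triangle[OF S] spread_Link[OF b(1), of v] b
  by (auto simp: valid_support_def algebra_simps)

text \<open>
  In the next three lemmas \<open>\<alpha> b\<close> and \<open>\<beta> b\<close> are the contributions of links into block b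
  and of loops at b to a linear relation among live columns; balance at b is that
  relation restricted to the rows of block b.
\<close>

lemma link_flow_live_from_left:
  assumes S: "repair_closed S"
    and loop: "\<And>b. b \<le> s \<Longrightarrow> \<beta> b \<in> live_vectors S (Loop b)"
    and link: "\<And>b. \<alpha> b \<in> live_vectors S (Link b)"
    and "\<alpha> 0 = 0" and "b0 \<le> s"
    and balanced: "\<And>b. b < b0 \<Longrightarrow> \<beta> b + \<alpha> b + \<alpha> (Suc b) = 0"
  shows "\<alpha> b0 \<in> live_vectors S (Loop b0)"
  using \<open>b0 \<le> s\<close> balanced
proof (induction b0)
  case 0
  then show ?case using \<open>\<alpha> 0 = 0\<close> zero_live_vectors by metis
next
  case (Suc b)
  then have "\<beta> b + \<alpha> b \<in> live_vectors S (Loop b)"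
    using live_vectors_add[OF S _ loop] by (simp add: valid_support_def)
  moreover have "\<beta> b + \<alpha> b + \<alpha> (Suc b) = 0"
    using Suc.prems(2)[of b] by blast
  then have "\<beta> b + \<alpha> b = \<alpha> (Suc b)"
    by (simp only: bit_fun_add_eq_0_iff)
  ultimately show ?case
    using live_Loop_right[OF S _ Suc.prems(1), of "\<alpha> (Suc b)"] link by simp
qed

lemma link_flow_live_from_right:
  assumes S: "repair_closed S"
    and loop: "\<And>b. b \<le> s \<Longrightarrow> \<beta> b \<in> live_vectors S (Loop b)"
    and link: "\<And>b. \<alpha> b \<in> live_vectors S (Link b)"
    and "\<alpha> (Suc s) = 0" and "b0 \<le> s"
    and balanced: "\<And>b. b0 < b \<Longrightarrow> b \<le> s \<Longrightarrow> \<beta> b + \<alpha> b + \<alpha> (Suc b) = 0"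
  shows "\<alpha> (Suc b0) \<in> live_vectors S (Loop b0)"
  using \<open>b0 \<le> s\<close> balanced
proof (induction b0 rule: inc_induct)
  case base
  then show ?case using \<open>\<alpha> (Suc s) = 0\<close> zero_live_vectors by metis
next
  case (step b)
  then have "\<beta> (Suc b) + \<alpha> (Suc (Suc b)) \<in> live_vectors S (Loop (Suc b))"
    using live_vectors_add[OF S _ loop] by (simp add: valid_support_def)
  moreover have "\<beta> (Suc b) + \<alpha> (Suc b) + \<alpha> (Suc (Suc b)) = 0"
    using step.prems[of "Suc b"] step.hyps le_imp_less_Suc Suc_leI by blast
  then have "\<beta> (Suc b) + \<alpha> (Suc (Suc b)) = \<alpha> (Suc b)"
    by (metis bit_fun_add_eq_0_iff add.commute add.left_commute)
  ultimately show ?case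
    using live_Loop_left[OF S, of "Suc b" "\<alpha> (Suc b)"] link step.hyps by simp
qed

lemma live_of_balanced_flow:
  assumes S: "repair_closed S" and e: "valid_support e"
    and loop: "\<And>b. b \<le> s \<Longrightarrow> \<beta> b \<in> live_vectors S (Loop b)"
    and link: "\<And>b. \<alpha> b \<in> live_vectors S (Link b)"
    and "\<alpha> 0 = 0" "\<alpha> (Suc s) = 0"
    and balance: "\<And>b. b \<le> s \<Longrightarrow> \<beta> b + \<alpha> b + \<alpha> (Suc b) = (if b \<in> blocks e then v else 0)"
  shows "v \<in> live_vectors S e"
proof -
  note flow_left = link_flow_live_from_left[OF S loop link \<open>\<alpha> 0 = 0\<close>]
  note flow_right = link_flow_live_from_right[OF S loop link \<open>\<alpha> (Suc s) = 0\<close>]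
  show ?thesis
  proof (cases e)
    case (Loop t)
    then have "t \<le> s" using e by (simp add: valid_support_def)
    have "\<alpha> t \<in> live_vectors S (Loop t)"
      by (rule flow_left) (use balance Loop \<open>t \<le> s\<close> in auto)
    moreover have "\<alpha> (Suc t) \<in> live_vectors S (Loop t)"
      by (rule flow_right) (use balance Loop \<open>t \<le> s\<close> in auto)
    moreover have "v = \<beta> t + \<alpha> t + \<alpha> (Suc t)"
      using balance[OF \<open>t \<le> s\<close>] Loop by simp
    ultimately show ?thesis
      using Loop live_vectors_add[OF S e] loop[OF \<open>t \<le> s\<close>] by simp
  next
    case (Link t)
    then have t: "1 \<le> t" "t \<le> s" using e by (simp_all add: valid_support_def)
    have "\<alpha> (t - 1) \<in> live_vectors S (Loop (t - 1))"
      by (rule flow_left) (use balance Link t in auto)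
    then have left: "\<beta> (t - 1) + \<alpha> (t - 1) \<in> live_vectors S (Loop (t - 1))"
      using live_vectors_add[OF S _ loop] t by (simp add: valid_support_def)
    have "\<alpha> (Suc t) \<in> live_vectors S (Loop t)"
      by (rule flow_right) (use balance Link t in auto)
    then have right: "\<beta> t + \<alpha> (Suc t) \<in> live_vectors S (Loop t)"
      using live_vectors_add[OF S _ loop] t by (simp add: valid_support_def)
    have "v = \<beta> (t - 1) + \<alpha> (t - 1) + \<alpha> t" and "v = \<beta> t + \<alpha> t + \<alpha> (Suc t)"
      using balance[of "t - 1"] balance[of t] Link t by auto
    then have "v + \<alpha> t = \<beta> (t - 1) + \<alpha> (t - 1)" and "v + \<alpha> t = \<beta> t + \<alpha> (Suc t)"
      by (simp_all add: add.assoc)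
    then have "v + \<alpha> t \<in> live_vectors S (Link t)"
      using live_Link[OF S t] left right by simp
    then have "v + \<alpha> t + \<alpha> t \<in> live_vectors S (Link t)"
      using live_vectors_add[OF S e[unfolded Link] _ link] by blast
    then show ?thesis using Link by (simp add: add.assoc)
  next
    case Void
    then show ?thesis using e by (simp add: valid_support_def)
  qed
qed

definition block :: "(nat \<Rightarrow> bit) \<Rightarrow> nat \<Rightarrow> nat \<Rightarrow> bit" where
  "block x b = (\<lambda>a. if a < k then x (b * k + a) else 0)"

lemma block_index_less: "b \<le> s \<Longrightarrow> a < k \<Longrightarrow> b * k + a < M"
proof -
  assume "b \<le> s" "a < k"
  then have "b * k + a < (b + 1) * k" by simp
  also have "\<dots> \<le> (s + 1) * k" using \<open>b \<le> s\<close> by (intro mult_right_mono) auto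
  finally show ?thesis by (simp add: msg_len_def)
qed

lemma block_gcol:
  assumes "c < N" "b \<le> s"
  shows "block (gcol k G s c) b = (if b \<in> blocks (node_support c) then node_vector c else 0)"
proof
  fix a
  show "block (gcol k G s c) b a = (if b \<in> blocks (node_support c) then node_vector c else 0) a"
    using block_index_less[OF assms(2)] node_vector_vanishes[of a c]
    by (cases "a < k") (simp_all add: block_def gcol_spread[OF assms(1)] spread_def)
qed

lemma mem_blocks_node_support:
  assumes "c < N"
  shows "b \<in> blocks (node_support c) \<longleftrightarrow>
    node_support c = Loop b \<or> node_support c = Link b \<or> node_support c = Link (Suc b)"
  using node_support_cases[OF assms]
  by (cases "node_support c") (auto simp: valid_support_def)

definition support_sum :: "nat set \<Rightarrow> support \<Rightarrow> nat \<Rightarrow> bit" where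
  "support_sum J e = (\<lambda>a. \<Sum>j\<in>J. if node_support j = e then node_vector j a else 0)"

lemma block_sum_gcol:
  assumes "J \<subseteq> {..<N}" "b \<le> s"
  shows "block (\<lambda>r. \<Sum>j\<in>J. gcol k G s j r) b =
    support_sum J (Loop b) + support_sum J (Link b) + support_sum J (Link (Suc b))"
proof
  fix a
  have "block (\<lambda>r. \<Sum>j\<in>J. gcol k G s j r) b a = (\<Sum>j\<in>J. block (gcol k G s j) b a)"
    by (simp add: block_def)
  also have "\<dots> = (\<Sum>j\<in>J. (if node_support j = Loop b then node_vector j a else 0)
      + (if node_support j = Link b then node_vector j a else 0)
      + (if node_support j = Link (Suc b) then node_vector j a else 0))"
    using assms block_gcol mem_blocks_node_support by (intro sum.cong) auto
  finally show "block (\<lambda>r. \<Sum>j\<in>J. gcol k G s j r) b a =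
      (support_sum J (Loop b) + support_sum J (Link b) + support_sum J (Link (Suc b))) a"
    by (simp add: support_sum_def sum.distrib)
qed

lemma support_sum_live:
  assumes S: "repair_closed S" and J: "finite J" "J \<subseteq> S" and e: "valid_support e"
  shows "support_sum J e \<in> live_vectors S e"
  using J
proof (induction J rule: finite_induct)
  case empty
  then show ?case by (simp add: support_sum_def flip: zero_fun_def)
next
  case (insert j J)
  then have "support_sum (insert j J) e =
      (if node_support j = e then node_vector j else 0) + support_sum J e"
    by (simp add: support_sum_def fun_eq_iff)
  moreover have "(if node_support j = e then node_vector j else 0) \<in> live_vectors S e"
    using live_vectorsI[of j S] insert.prems by auto
  ultimately show ?case
    using live_vectors_add[OF S e] insert.IH insert.prems by (metis insert_subset)
qed

lemma support_sum_invalid: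
  assumes "J \<subseteq> {..<N}" "\<not> valid_support e" "e \<noteq> Void"
  shows "support_sum J e = 0"
proof -
  have "node_support j \<noteq> e" if "j \<in> J" for j
    using node_support_cases[of j] assms that by auto
  then show ?thesis by (simp add: support_sum_def fun_eq_iff)
qed

lemma node_vector_live_if_in_span:
  assumes S: "repair_closed S" and J: "finite J" "J \<subseteq> S" and i: "i < N"
    and e: "valid_support (node_support i)"
    and span: "gcol k G s i = (\<lambda>r. \<Sum>j\<in>J. gcol k G s j r)"
  shows "node_vector i \<in> live_vectors S (node_support i)"
proof -
  have JN: "J \<subseteq> {..<N}" using S J by (auto simp: repair_closed_def)
  define \<alpha> \<beta> where "\<alpha> b = support_sum J (Link b)" and "\<beta> b = support_sum J (Loop b)" for b
  show ?thesis
  proof (rule live_of_balanced_flow[OF S e])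
    show "\<beta> b \<in> live_vectors S (Loop b)" if "b \<le> s" for b
      using support_sum_live[OF S J] that by (simp add: \<beta>_def valid_support_def)
    show "\<alpha> b \<in> live_vectors S (Link b)" for b
      using support_sum_live[OF S J, of "Link b"] support_sum_invalid[OF JN, of "Link b"]
      by (cases "valid_support (Link b)") (simp_all add: \<alpha>_def)
    show "\<alpha> 0 = 0" "\<alpha> (Suc s) = 0"
      using support_sum_invalid[OF JN] by (simp_all add: \<alpha>_def valid_support_def)
    show "\<beta> b + \<alpha> b + \<alpha> (Suc b) = (if b \<in> blocks (node_support i) then node_vector i else 0)"
      if "b \<le> s" for b
      using block_sum_gcol[OF JN that] block_gcol[OF i that] span by (simp add: \<alpha>_def \<beta>_def)
  qed
qed

lemma repair_closed_span_mem:
  assumes S: "repair_closed S" and J: "finite J" "J \<subseteq> S" and i: "i < N"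
    and span: "gcol k G s i = (\<lambda>r. \<Sum>j\<in>J. gcol k G s j r)"
  shows "i \<in> S"
proof (cases "node_support i = Void")
  case True
  then show ?thesis
    using repair_closed_mem[OF S i, of "{}"] gcol_spread[OF i] by (simp add: spread_def fun_eq_iff)
next
  case False
  then have "node_vector i \<in> live_vectors S (node_support i)"
    using node_vector_live_if_in_span[OF S J i _ span] node_support_cases[OF i] by simp
  then obtain c where c: "c \<in> S" "node_support c = node_support i" "node_vector c = node_vector i"
    using node_vector_nonzero[of i] by (auto simp: live_vectors_def)
  then have "c < N" using S by (auto simp: repair_closed_def)
  then show ?thesis
    using repair_closed_mem[OF S i, of "{c}"] c gcol_spread[OF i] by (simp add: gcol_spread)
qed

lemma codeword_eq_bit_inner: "codeword k G s u c = bit_inner M u (gcol k G s c)"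
  by (simp add: codeword_def bit_inner_def gcol_def)

lemma gcol_vanishes: "M \<le> r \<Longrightarrow> gcol k G s c r = 0"
  by (simp add: gcol_def G_total_def msg_len_def)

lemma correctable_in_live_span:
  assumes cor: "correctable k G s E" and i: "i \<in> E" "i < N"
  shows "\<exists>J. finite J \<and> J \<subseteq> {..<N} - E \<and> gcol k G s i = (\<lambda>r. \<Sum>j\<in>J. gcol k G s j r)"
proof (rule ccontr)
  assume not_span: "\<not> ?thesis"
  have "\<forall>J\<subseteq>{..<N} - E. \<exists>r<M. gcol k G s i r \<noteq> (\<Sum>j\<in>J. gcol k G s j r)"
  proof (intro allI impI)
    fix J assume J: "J \<subseteq> {..<N} - E"
    have "finite J" by (rule finite_subset[OF J]) simp
    with not_span J have "gcol k G s i \<noteq> (\<lambda>r. \<Sum>j\<in>J. gcol k G s j r)" by blast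
    then obtain r where r: "gcol k G s i r \<noteq> (\<Sum>j\<in>J. gcol k G s j r)" by auto
    moreover have "r < M"
      using r gcol_vanishes by (cases "r < M") simp_all
    ultimately show "\<exists>r<M. gcol k G s i r \<noteq> (\<Sum>j\<in>J. gcol k G s j r)" by blast
  qed
  then obtain u where u: "\<forall>j\<in>{..<N} - E. bit_inner M u (gcol k G s j) = 0"
      "bit_inner M u (gcol k G s i) = 1"
    using exists_separating_vector[of "{..<N} - E" M "gcol k G s i" "gcol k G s"] by blast
  have "\<forall>c<N. c \<notin> E \<longrightarrow> codeword k G s u c = codeword k G s 0 c"
    using u(1) by (simp add: codeword_eq_bit_inner bit_inner_def)
  then have "codeword k G s u i = codeword k G s 0 i"
    using cor i unfolding correctable_def by blast
  with u(2) show False by (simp add: codeword_eq_bit_inner bit_inner_def)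
qed

lemma easy_repair_property_holds: "easy_repair_property k G s"
  unfolding easy_repair_property_def easy_repair_pattern_def
proof (intro allI impI)
  fix E assume E: "E \<subseteq> {..<N}" and cor: "correctable k G s E"
  have "\<exists>i\<in>T. easy_repair_node k G s ({..<N} - T) i" if T: "T \<subseteq> E" "T \<noteq> {}" for T
  proof (rule ccontr)
    assume "\<not> ?thesis"
    then have closed: "repair_closed ({..<N} - T)" by (auto simp: repair_closed_def)
    obtain i where "i \<in> T" using T by blast
    with E T have "i < N" by blast
    obtain J where "finite J" "J \<subseteq> {..<N} - T" "gcol k G s i = (\<lambda>r. \<Sum>j\<in>J. gcol k G s j r)"
      using correctable_in_live_span[OF correctable_mono[OF cor T(1)] \<open>i \<in> T\<close> \<open>i < N\<close>]
      by blast
    with \<open>i < N\<close> have "i \<in> {..<N} - T" by (intro repair_closed_span_mem[OF closed])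
    with \<open>i \<in> T\<close> show False by blast
  qed
  then show "\<exists>xs. distinct xs \<and> set xs = E \<and>
      (\<forall>t<length xs. easy_repair_node k G s ({..<N} - E \<union> set (take t xs)) (xs ! t))"
    using exists_repair_order[OF finite_subset[OF E finite_lessThan] E] by blast
qed

end

theorem theorem5p2:
  fixes k s :: nat and G :: "nat \<Rightarrow> nat \<Rightarrow> bit"
  assumes "k \<ge> 2" and "simplex_generator k G"
  shows "easy_repair_property k G s"
proof -
  interpret um_simplex_code k s G
    using assms by unfold_locales simp_all
  show ?thesis by (rule easy_repair_property_holds)
qed

end
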